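(* Let $G=(V,E)$ be a graph, $v\in V$, $S_v$ the partial star product of $v$, and $f\in F_v$. Then $f$ is the opposite edge (in a square of $S_v$) of exactly one primal edge $e\in E_v$, and $(e,f)\in\mathfrak d_{|S_v}$.
   Context: All graphs are finite, simple and undirected. For a graph $G=(V,E)$ and $v\in V$, $E_v$ denotes the set of edges incident to $v$. For two distinct adjacent edges $e=(v,u)$, $f=(v,w)$, a square spanned by $e$ and $f$ is a $4$-cycle $v,u,x,w,v$ with $x\notin\{v,u,w\}$; $x$ is its top vertex. The square is chordless if neither $(u,w)$ nor $(v,x)$ is an edge of $G$. In a square $v,u,x,w$, $(x,w)$ is the opposite edge of $(v,u)$ and $(x,u)$ is the opposite edge of $(v,w)$ (and vice versa). The relation $\delta(G)\subseteq E\times E$: $(e,f)\in\delta(G)$ iff (i) $e,f$ are distinct adjacent edges and it is not the case that $e$ and $f$ span exactly one square and that square is chordless; or (ii) $e,f$ are opposite edges of a chordless square; or (iii) $e=f$. Define $\mathfrak d_v=((E_v\times E)\cup(E\times E_v))\cap\delta(G)$ and $\mathfrak d_v^*$ the finest equivalence relation on $E$ containing $\mathfrak d_v$. Let $F_v\subseteq E\setminus E_v$ be the set of edges that are the edges not incident to $v$ of some chordless square spanned by two edges $e,e'\in E_v$ with $(e,e')\notin\mathfrak d_v^*$. The partial star product $S_v$ is the subgraph of $G$ with edge set $E_v\cup F_v$ and vertex set the endpoints of these edges. Define $\mathfrak d_{|S_v}=\{(e,f)\in\mathfrak d_v^*: e,f\in E(S_v)\}$, an equivalence relation on $E(S_v)$.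 *)

theory Defs
  imports Main
begin

definition graph :: "'a set \<Rightarrow> 'a set set \<Rightarrow> bool" where
  "graph V E \<longleftrightarrow> finite V \<and> (\<forall>e\<in>E. \<exists>u w. u \<noteq> w \<and> u \<in> V \<and> w \<in> V \<and> e = {u, w})"

definition inc_edges :: "'a set set \<Rightarrow> 'a \<Rightarrow> 'a set set" where
  "inc_edges E v = {e \<in> E. v \<in> e}"

text \<open>x is the top vertex of a square v,u,x,w,v spanned by (v,u) and (v,w).\<close>
definition sq_top :: "'a set set \<Rightarrow> 'a \<Rightarrow> 'a \<Rightarrow> 'a \<Rightarrow> 'a \<Rightarrow> bool" where
  "sq_top E v u w x \<longleftrightarrow> x \<notin> {v, u, w} \<and> {u, x} \<in> E \<and> {x, w} \<in> E"

definition chordless :: "'a set set \<Rightarrow> 'a \<Rightarrow> 'a \<Rightarrow> 'a \<Rightarrow> 'a \<Rightarrow> bool" where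
  "chordless E v u w x \<longleftrightarrow> {u, w} \<notin> E \<and> {v, x} \<notin> E"

definition cycle4 :: "'a set set \<Rightarrow> 'a \<Rightarrow> 'a \<Rightarrow> 'a \<Rightarrow> 'a \<Rightarrow> bool" where
  "cycle4 E a b c d \<longleftrightarrow> distinct [a, b, c, d] \<and>
     {a, b} \<in> E \<and> {b, c} \<in> E \<and> {c, d} \<in> E \<and> {d, a} \<in> E"

definition opposite :: "'a set set \<Rightarrow> 'a set \<Rightarrow> 'a set \<Rightarrow> bool" where
  "opposite E e f \<longleftrightarrow> (\<exists>a b c d. cycle4 E a b c d \<and> e = {a, b} \<and> f = {c, d})"

definition opposite_chordless :: "'a set set \<Rightarrow> 'a set \<Rightarrow> 'a set \<Rightarrow> bool" where
  "opposite_chordless E e f \<longleftrightarrow> (\<exists>a b c d. cycle4 E a b c d \<and> {a, c} \<notin> E \<and> {b, d} \<notin> E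
      \<and> e = {a, b} \<and> f = {c, d})"

text \<open>Condition (i): distinct adjacent edges, and it is not the case that they span exactly one
  square and that square is chordless.\<close>
definition delta_i :: "'a set set \<Rightarrow> 'a set \<Rightarrow> 'a set \<Rightarrow> bool" where
  "delta_i E e f \<longleftrightarrow> (\<exists>v u w. u \<noteq> w \<and> v \<noteq> u \<and> v \<noteq> w \<and> e = {v, u} \<and> f = {v, w} \<and>
      \<not> (\<exists>x. {y. sq_top E v u w y} = {x} \<and> chordless E v u w x))"

definition delta :: "'a set set \<Rightarrow> ('a set \<times> 'a set) set" where
  "delta E = {(e, f). e \<in> E \<and> f \<in> E \<and> (delta_i E e f \<or> opposite_chordless E e f \<or> e = f)}"

definition dv :: "'a set set \<Rightarrow> 'a \<Rightarrow> ('a set \<times> 'a set) set" where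
  "dv E v = ((inc_edges E v \<times> E) \<union> (E \<times> inc_edges E v)) \<inter> delta E"

definition dv_star :: "'a set set \<Rightarrow> 'a \<Rightarrow> ('a set \<times> 'a set) set" where
  "dv_star E v = \<Inter> {R. equiv E R \<and> dv E v \<subseteq> R}"

definition Fv :: "'a set set \<Rightarrow> 'a \<Rightarrow> 'a set set" where
  "Fv E v = {g. g \<in> E \<and> g \<notin> inc_edges E v \<and> (\<exists>u w x.
      {v, u} \<in> inc_edges E v \<and> {v, w} \<in> inc_edges E v \<and> u \<noteq> w \<and> v \<noteq> u \<and> v \<noteq> w \<and>
      ({v, u}, {v, w}) \<notin> dv_star E v \<and> sq_top E v u w x \<and> chordless E v u w x \<and>
      (g = {u, x} \<or> g = {x, w}))}"

definition Sv_edges :: "'a set set \<Rightarrow> 'a \<Rightarrow> 'a set set" where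
  "Sv_edges E v = inc_edges E v \<union> Fv E v"

definition Sv_verts :: "'a set set \<Rightarrow> 'a \<Rightarrow> 'a set" where
  "Sv_verts E v = \<Union> (Sv_edges E v)"

definition d_restr :: "'a set set \<Rightarrow> 'a \<Rightarrow> ('a set \<times> 'a set) set" where
  "d_restr E v = {(e, f) \<in> dv_star E v. e \<in> Sv_edges E v \<and> f \<in> Sv_edges E v}"

end

theory Submission
  imports Defs
begin

text \<open>Write \<open>f = {u,x}\<close> for the edge of \<open>F\<^sub>v\<close>, coming from a chordless square \<open>v,u,x,w\<close> whose
  primal edges \<open>{v,u}, {v,w}\<close> are not \<open>dv_star\<close>-related. The opposite primal edge \<open>{v,w}\<close>
  is \<open>\<delta>\<close>-related to \<open>f\<close> by condition (ii). Conversely, in any square through \<open>v\<close> and \<open>f\<close> the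
  vertex \<open>v\<close> must be adjacent to \<open>u\<close>, as \<open>{v,x}\<close> is a chord; so the square is \<open>v,y,x,u\<close> for a
  common neighbour \<open>y\<close> of \<open>v\<close> and \<open>x\<close>. If \<open>y \<noteq> w\<close>, the edges \<open>{w,v}, {w,x}\<close> span the two squares
  with tops \<open>u\<close> and \<open>y\<close>, hence are \<open>\<delta>\<close>-related by (i), and chaining with (ii) relates \<open>{v,u}\<close> and
  \<open>{v,w}\<close>, a contradiction.\<close>

lemma dv_subset_dv_star: "dv E v \<subseteq> dv_star E v"
  unfolding dv_star_def by blast

lemma dv_star_sym: "(a, b) \<in> dv_star E v \<Longrightarrow> (b, a) \<in> dv_star E v"
  unfolding dv_star_def equiv_def by (auto dest: symD)

lemma dv_star_trans: "(a, b) \<in> dv_star E v \<Longrightarrow> (b, c) \<in> dv_star E v \<Longrightarrow> (a, c) \<in> dv_star E v"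
  unfolding dv_star_def equiv_def by (auto dest: transD)

lemma delta_in_dv: "(e, f) \<in> delta E \<Longrightarrow> v \<in> e \<Longrightarrow> (e, f) \<in> dv E v"
  unfolding dv_def delta_def inc_edges_def by auto

lemma opposite_chordless_in_delta: "opposite_chordless E e f \<Longrightarrow> (e, f) \<in> delta E"
  unfolding delta_def opposite_chordless_def cycle4_def by auto

lemma delta_i_if_two_tops:
  assumes "sq_top E v u w x" "sq_top E v u w y" "x \<noteq> y" "u \<noteq> w" "v \<noteq> u" "v \<noteq> w"
  shows "delta_i E {v, u} {v, w}"
proof -
  have "\<nexists>t. {y. sq_top E v u w y} = {t}"
    using assms(1-3) by (metis mem_Collect_eq singletonD)
  then show ?thesis
    unfolding delta_i_def using assms(4-6) by blast
qed

lemma opposite_mono: "E \<subseteq> E' \<Longrightarrow> opposite E e f \<Longrightarrow> opposite E' e f"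
  unfolding opposite_def cycle4_def by blast

lemma opposite_doubletonE:
  assumes "opposite E e {p, q}"
  obtains a b where "cycle4 E a b q p" "e = {a, b}"
proof -
  obtain a b c d where cyc: "cycle4 E a b c d" and e: "e = {a, b}" and cd: "{c, d} = {p, q}"
    using assms unfolding opposite_def by metis
  show ?thesis
  proof (cases "c = q")
    case True
    then show ?thesis using that cyc e cd by (auto simp: doubleton_eq_iff cycle4_def)
  next
    case False
    then have "cycle4 E b a q p"
      using cyc cd unfolding cycle4_def by (auto simp: doubleton_eq_iff insert_commute)
    then show ?thesis using that e by (simp add: insert_commute)
  qed
qed

lemma Sv_edges_subset: "Sv_edges E v \<subseteq> E"
  unfolding Sv_edges_def inc_edges_def Fv_def by auto

definition chordless_square :: "'a set set \<Rightarrow> 'a \<Rightarrow> 'a \<Rightarrow> 'a \<Rightarrow> 'a \<Rightarrow> bool" where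
  "chordless_square E v u w x \<longleftrightarrow> {v, u} \<in> E \<and> {v, w} \<in> E \<and> u \<noteq> w \<and> v \<noteq> u \<and> v \<noteq> w
     \<and> sq_top E v u w x \<and> chordless E v u w x"

lemma chordless_square_commute: "chordless_square E v u w x \<longleftrightarrow> chordless_square E v w u x"
  unfolding chordless_square_def sq_top_def chordless_def by (auto simp: insert_commute)

lemma chordless_square_cycle4: "chordless_square E v u w x \<Longrightarrow> cycle4 E v u x w"
  unfolding chordless_square_def sq_top_def cycle4_def by (auto simp: insert_commute)

lemma chordless_square_opposite_chordless:
  "chordless_square E v u w x \<Longrightarrow> opposite_chordless E {v, u} {x, w}"
  unfolding opposite_chordless_def
  using chordless_square_cycle4 by (fastforce simp: chordless_square_def chordless_def)

lemma chordless_square_dv_star: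
  assumes "chordless_square E v u w x"
  shows "({v, u}, {x, w}) \<in> dv_star E v"
proof -
  have "({v, u}, {x, w}) \<in> dv E v"
    using assms by (intro delta_in_dv opposite_chordless_in_delta chordless_square_opposite_chordless) simp_all
  then show ?thesis
    by (rule subsetD[OF dv_subset_dv_star])
qed

lemma chordless_square_in_Fv:
  assumes "chordless_square E v u w x" "({v, u}, {v, w}) \<notin> dv_star E v"
  shows "{u, x} \<in> Fv E v"
  using assms unfolding Fv_def chordless_square_def inc_edges_def sq_top_def by auto

lemma FvE:
  assumes "f \<in> Fv E v"
  obtains u w x where "chordless_square E v u w x" "({v, u}, {v, w}) \<notin> dv_star E v" "f = {u, x}"
proof -
  obtain u w x where sq: "chordless_square E v u w x" and nr: "({v, u}, {v, w}) \<notin> dv_star E v"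
    and f: "f = {u, x} \<or> f = {x, w}"
    using assms unfolding Fv_def chordless_square_def inc_edges_def by blast
  show ?thesis
  proof (cases "f = {u, x}")
    case False
    then have "f = {w, x}" using f by (simp add: insert_commute)
    moreover have "chordless_square E v w u x" using sq chordless_square_commute by metis
    moreover have "({v, w}, {v, u}) \<notin> dv_star E v" using nr dv_star_sym by metis
    ultimately show ?thesis using that by blast
  qed (use that sq nr in blast)
qed

lemma common_neighbour_eq_if_not_dv_star:
  assumes sq: "chordless_square E v u w x" and nr: "({v, u}, {v, w}) \<notin> dv_star E v"
    and "{v, y} \<in> E" "{y, x} \<in> E" "y \<noteq> u" "y \<noteq> v" "y \<noteq> x"
  shows "y = w"
proof (rule ccontr)
  assume "y \<noteq> w"
  with assms have tops: "sq_top E w v x u" "sq_top E w v x y"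
    unfolding chordless_square_def sq_top_def by (auto simp: insert_commute)
  have "delta_i E {w, v} {w, x}"
    using sq \<open>y \<noteq> u\<close> unfolding chordless_square_def sq_top_def
    by (intro delta_i_if_two_tops[OF tops]) auto
  with sq have "({w, v}, {w, x}) \<in> delta E"
    unfolding delta_def chordless_square_def sq_top_def by (auto simp: insert_commute)
  then have "({v, w}, {x, w}) \<in> dv_star E v"
    using delta_in_dv dv_subset_dv_star by (fastforce simp: insert_commute)
  then show False
    using chordless_square_dv_star[OF sq] nr dv_star_trans dv_star_sym by metis
qed

lemma opposite_primal_edge_unique:
  assumes sq: "chordless_square E v u w x" and nr: "({v, u}, {v, w}) \<notin> dv_star E v"
    and "v \<in> e" and "opposite E e {u, x}"
  shows "e = {v, w}"
proof -
  obtain a b where cyc: "cycle4 E a b x u" and e: "e = {a, b}"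
    using assms(4) by (rule opposite_doubletonE)
  have "v \<noteq> b"
    using cyc sq unfolding cycle4_def chordless_square_def chordless_def by auto
  then have "v = a" using \<open>v \<in> e\<close> e by auto
  then have "b = w"
    using cyc by (intro common_neighbour_eq_if_not_dv_star[OF sq nr]) (auto simp: cycle4_def)
  then show ?thesis using e \<open>v = a\<close> by simp
qed

theorem lemma3p4:
  fixes V :: "'a set" and E :: "'a set set" and v :: 'a and f :: "'a set"
  assumes "graph V E" and "v \<in> V" and "f \<in> Fv E v"
  shows "\<exists>e. (e \<in> inc_edges E v \<and> opposite (Sv_edges E v) e f \<and> (e, f) \<in> d_restr E v)
           \<and> (\<forall>e'. e' \<in> inc_edges E v \<and> opposite (Sv_edges E v) e' f \<longrightarrow> e' = e)"
proof -
  obtain u w x where sq: "chordless_square E v u w x" and nr: "({v, u}, {v, w}) \<notin> dv_star E v"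
    and f: "f = {u, x}"
    using assms(3) by (rule FvE)
  have sq': "chordless_square E v w u x" and nr': "({v, w}, {v, u}) \<notin> dv_star E v"
    using sq nr chordless_square_commute dv_star_sym by metis+
  have primal: "{v, w} \<in> inc_edges E v" "{v, u} \<in> inc_edges E v"
    using sq unfolding chordless_square_def inc_edges_def by auto
  have "{w, x} \<in> Sv_edges E v" "{u, x} \<in> Sv_edges E v"
    using chordless_square_in_Fv[OF sq nr] chordless_square_in_Fv[OF sq' nr']
    unfolding Sv_edges_def by auto
  with primal have "cycle4 (Sv_edges E v) v w x u"
    using chordless_square_cycle4[OF sq'] unfolding cycle4_def Sv_edges_def
    by (auto simp: insert_commute)
  then have opp: "opposite (Sv_edges E v) {v, w} f"
    unfolding opposite_def f by blast
  have "({v, w}, f) \<in> dv_star E v"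
    using chordless_square_dv_star[OF sq'] f insert_commute[of x u "{}"] by simp
  then have "({v, w}, f) \<in> d_restr E v"
    using primal assms(3) unfolding d_restr_def Sv_edges_def by auto
  moreover have "e' = {v, w}" if e': "e' \<in> inc_edges E v" "opposite (Sv_edges E v) e' f" for e'
  proof (rule opposite_primal_edge_unique[OF sq nr])
    show "v \<in> e'" using e'(1) unfolding inc_edges_def by simp
    show "opposite E e' {u, x}" using opposite_mono[OF Sv_edges_subset e'(2)] f by simp
  qed
  ultimately show ?thesis using primal opp by blast
qed

end
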